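(* For every integer $n\ge1$ and every $k=1,\dots,n$, one has $|a_{nk}|>1$ and $|b_{nk}|<1$.
   Context: For $n\ge1$ let $y_n(z)=\sum_{k=0}^{n}\frac{(n+k)!}{(n-k)!\,k!}\left(\frac{z}{2}\right)^k$ be the $n$-th Bessel polynomial and let $\alpha_{n1},\dots,\alpha_{nn}$ be its zeros (they are simple). Put $a_{nk}=1-\alpha_{nk}/2$ and $b_{nk}=1+\alpha_{nk}/2$ for $k=1,\dots,n$. *)

theory Defs
  imports "HOL-Analysis.Analysis" "HOL-Computational_Algebra.Polynomial"
begin

definition bessel_poly :: "nat \<Rightarrow> complex poly" where
  "bessel_poly n = (\<Sum>k\<le>n. monom (of_nat (fact (n + k) div (fact (n - k) * fact k)) / 2 ^ k) k)"

end

theory Submission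
  imports Defs
begin

(* Write g_j for the j-th derivative of y_n. Differentiating the Bessel equation
   z^2 y'' + 2(z + 1) y' = n(n + 1) y  j times gives the three-term relation
   z^2 g_(j+2) + 2((j + 1) z + 1) g_(j+1) = (n - j)(n + j + 1) g_j,
   so the ratios R_j = z g_(j+1) / g_j satisfy
   (n - j)(n + j + 1) / R_j = R_(j+1) + 2(j + 1) + 2/z.
   Descending from R_n = 0, this shows that for Re (1/z) > -1 no g_j vanishes at z and
   every R_j has nonnegative real part. Hence a zero \<alpha> of y_n has
   Re (1/\<alpha>) <= -1, i.e. |\<alpha>|^2 <= -Re \<alpha>, and
   |1 +- \<alpha>/2|^2 = 1 +- Re \<alpha> + |\<alpha>|^2/4 gives both bounds. *)

lemma coeff_bessel_poly:
  "coeff (bessel_poly n) k =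
     (if k \<le> n then fact (n + k) / (fact (n - k) * fact k * 2 ^ k) else 0)"
proof -
  have "fact (n - k) * fact k dvd (fact (n + k) :: nat)" if "k \<le> n"
  proof -
    have "fact (n - k) * fact k dvd (fact n * fact k :: nat)"
      by (intro mult_dvd_mono fact_dvd) (use that in auto)
    also have "\<dots> dvd fact (n + k)"
      by (rule fact_fact_dvd_fact)
    finally show ?thesis .
  qed
  then show ?thesis
    unfolding bessel_poly_def by (simp add: coeff_sum coeff_monom of_nat_of_nat_div)
qed

lemma bessel_poly_coeff_rec:
  "2 * of_nat (Suc k) * coeff (bessel_poly n) (Suc k)
     = of_nat (n - k) * of_nat (n + k + 1) * coeff (bessel_poly n) k"
proof (cases "k < n")
  case True
  then obtain m where n: "n = Suc (k + m)"
    using less_iff_Suc_add by auto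
  have "2 * of_nat (Suc k) * coeff (bessel_poly n) (Suc k)
          = 2 * of_nat (Suc k) *
              (fact (Suc (n + k)) / (fact m * (of_nat (Suc k) * fact k) * (2 * 2 ^ k)))"
    by (simp add: coeff_bessel_poly n del: of_nat_Suc)
  also have "\<dots> = fact (Suc (n + k)) / (fact m * fact k * 2 ^ k)"
    by (simp add: field_simps del: of_nat_Suc fact_Suc)
  also have "\<dots> = of_nat (Suc m) * of_nat (Suc (n + k)) *
                      (fact (n + k) / (of_nat (Suc m) * fact m * fact k * 2 ^ k))"
    by (simp add: field_simps del: of_nat_Suc)
  also have "\<dots> = of_nat (n - k) * of_nat (n + k + 1) * coeff (bessel_poly n) k"
    by (simp add: coeff_bessel_poly n del: of_nat_Suc)
  finally show ?thesis .
next
  case False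
  then show ?thesis
    by (simp add: coeff_bessel_poly)
qed

lemma coeff_bessel_operator:
  fixes p :: "'a::idom poly"
  shows "coeff ([:0, 0, 1:] * pderiv (pderiv p) + [:2, 2:] * pderiv p) k
           = of_nat k * of_nat (Suc k) * coeff p k + 2 * of_nat (Suc k) * coeff p (Suc k)"
proof (cases k)
  case (Suc i)
  then show ?thesis
    by (cases i) (simp_all add: coeff_pderiv algebra_simps)
qed (simp add: coeff_pderiv)

lemma bessel_poly_ode:
  "[:0, 0, 1:] * pderiv (pderiv (bessel_poly n)) + [:2, 2:] * pderiv (bessel_poly n)
     = smult (of_nat n * of_nat (Suc n)) (bessel_poly n)"
proof (rule poly_eqI)
  fix k
  let ?c = "coeff (bessel_poly n) k"
  have "of_nat k * of_nat (Suc k) * ?c + of_nat (n - k) * of_nat (n + k + 1) * ?c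
          = of_nat n * of_nat (Suc n) * ?c"
  proof (cases "k \<le> n")
    case True
    then have "of_nat k * of_nat (Suc k) + of_nat (n - k) * of_nat (n + k + 1)
                 = (of_nat n * of_nat (Suc n) :: complex)"
      by (simp add: of_nat_diff algebra_simps)
    then show ?thesis
      by (metis distrib_right)
  qed (simp add: coeff_bessel_poly)
  then show "coeff ([:0, 0, 1:] * pderiv (pderiv (bessel_poly n))
                      + [:2, 2:] * pderiv (bessel_poly n)) k
      = coeff (smult (of_nat n * of_nat (Suc n)) (bessel_poly n)) k"
    unfolding coeff_bessel_operator coeff_smult bessel_poly_coeff_rec .
qed

lemma higher_pderiv_bessel_operator:
  fixes p :: "'a::idom poly"
  assumes "[:0, 0, 1:] * pderiv (pderiv p) + [:2, 2:] * pderiv p = smult c p"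
  shows "[:0, 0, 1:] * (pderiv ^^ Suc (Suc j)) p + [:2, 2 * of_nat (Suc j):] * (pderiv ^^ Suc j) p
           = smult (c - of_nat j * of_nat (Suc j)) ((pderiv ^^ j) p)"
proof (induction j)
  case 0
  then show ?case
    using assms by simp
next
  case (Suc j)
  let ?g = "\<lambda>i. (pderiv ^^ i) p"
  have "[:0, 0, 1:] * ?g (Suc (Suc (Suc j)))
          + [:2, 2 * of_nat (Suc (Suc j)):] * ?g (Suc (Suc j))
          + smult (2 * of_nat (Suc j)) (?g (Suc j))
      = pderiv ([:0, 0, 1:] * ?g (Suc (Suc j)) + [:2, 2 * of_nat (Suc j):] * ?g (Suc j))"
    by (simp add: pderiv_add pderiv_mult pderiv_smult pderiv_pCons numeral_poly smult_add_left
        algebra_simps)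
  also have "\<dots> = smult (c - of_nat j * of_nat (Suc j)) (?g (Suc j))"
    by (simp only: Suc.IH) (simp add: pderiv_smult)
  finally have "[:0, 0, 1:] * ?g (Suc (Suc (Suc j)))
          + [:2, 2 * of_nat (Suc (Suc j)):] * ?g (Suc (Suc j))
      = smult (c - of_nat j * of_nat (Suc j) - 2 * of_nat (Suc j)) (?g (Suc j))"
    unfolding smult_diff_left by (rule add_implies_diff)
  moreover have "c - of_nat j * of_nat (Suc j) - 2 * of_nat (Suc j)
                   = c - of_nat (Suc j) * of_nat (Suc (Suc j))"
    by (simp add: algebra_simps)
  ultimately show ?case
    by (simp only:)
qed

lemma degree_bessel_poly: "degree (bessel_poly n) = n"
proof (rule antisym)
  show "degree (bessel_poly n) \<le> n"
    by (rule degree_le) (simp add: coeff_bessel_poly)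
  show "n \<le> degree (bessel_poly n)"
    by (rule le_degree) (simp add: coeff_bessel_poly)
qed

lemma poly_higher_pderiv_bessel_poly_top:
  "poly ((pderiv ^^ n) (bessel_poly n)) z \<noteq> 0"
proof -
  have "degree ((pderiv ^^ n) (bessel_poly n)) = 0"
    by (simp add: degree_higher_pderiv degree_bessel_poly)
  then have "(pderiv ^^ n) (bessel_poly n) = [:coeff ((pderiv ^^ n) (bessel_poly n)) 0:]"
    by (rule degree_0_id[symmetric])
  also have "\<dots> = [:fact n * coeff (bessel_poly n) n:]"
    by (simp add: coeff_higher_pderiv flip: pochhammer_fact)
  finally show ?thesis
    by (simp add: coeff_bessel_poly)
qed

(* Dividing the relation by z g1 gives d g0 / (z g1) = z g2 / g1 + 2a + 2/z, and the
   right-hand side has positive real part. *)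
lemma Re_ratio_nonneg_step:
  fixes z g0 g1 g2 :: complex and a d :: real
  assumes z: "Re (1 / z) > -1" and a: "a \<ge> 1" and d: "d > 0"
    and g1: "g1 \<noteq> 0" and g2: "Re (z * g2 / g1) \<ge> 0"
    and rec: "z\<^sup>2 * g2 + (2 + 2 * a * z) * g1 = d * g0"
  shows "g0 \<noteq> 0 \<and> Re (z * g1 / g0) \<ge> 0"
proof (cases "z = 0")
  case True
  then show ?thesis
    using rec g1 d by auto
next
  case False
  define w where "w = 1 / z"
  define q where "q = z * g2 / g1 + 2 * a + 2 * w"
  have "Re q > 0"
    using z a g2 unfolding q_def w_def[symmetric] by simp
  then have "q \<noteq> 0"
    by auto
  have "d * g0 = z * g1 * q"
    using rec False g1 unfolding q_def w_def by (simp add: field_simps power2_eq_square)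
  moreover have "g0 \<noteq> 0"
    using \<open>d * g0 = z * g1 * q\<close> \<open>q \<noteq> 0\<close> False g1 by auto
  ultimately have "z * g1 / g0 = d / q"
    using \<open>q \<noteq> 0\<close> by (simp add: field_simps)
  moreover have "Re (d / q) > 0"
    using \<open>Re q > 0\<close> \<open>q \<noteq> 0\<close> d by (simp add: Re_Reals_divide)
  ultimately show ?thesis
    using \<open>g0 \<noteq> 0\<close> by simp
qed

lemma poly_higher_pderiv_bessel_poly_nonzero:
  fixes z :: complex
  assumes z: "Re (1 / z) > -1" and "j \<le> n"
  shows "poly ((pderiv ^^ j) (bessel_poly n)) z \<noteq> 0 \<and>
    Re (z * poly ((pderiv ^^ Suc j) (bessel_poly n)) z
          / poly ((pderiv ^^ j) (bessel_poly n)) z) \<ge> 0"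
  using \<open>j \<le> n\<close>
proof (induction j rule: inc_induct)
  case base
  have "(pderiv ^^ Suc n) (bessel_poly n) = 0"
    by (simp add: pderiv_eq_0_iff degree_higher_pderiv degree_bessel_poly)
  then show ?case
    using poly_higher_pderiv_bessel_poly_top by simp
next
  case (step j)
  let ?g = "\<lambda>i. poly ((pderiv ^^ i) (bessel_poly n)) z"
  define d where "d = real n * real (Suc n) - real j * real (Suc j)"
  have "real j * real (Suc j) < real n * real (Suc n)"
    using \<open>j < n\<close> by (intro mult_strict_mono) auto
  then have "d > 0"
    by (simp add: d_def)
  have "z\<^sup>2 * ?g (Suc (Suc j)) + (2 + 2 * real (Suc j) * z) * ?g (Suc j) = d * ?g j"
    using arg_cong[OF higher_pderiv_bessel_operator[OF bessel_poly_ode, of j],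
                   where f = "\<lambda>p. poly p z"]
    by (simp add: d_def algebra_simps power2_eq_square)
  from Re_ratio_nonneg_step[OF z _ \<open>d > 0\<close> _ _ this] step.IH show ?case
    by simp
qed

lemma Re_inverse_bessel_poly_root:
  assumes "poly (bessel_poly n) \<alpha> = 0"
  shows "Re (1 / \<alpha>) \<le> -1"
  using poly_higher_pderiv_bessel_poly_nonzero[of \<alpha> 0 n] assms by force

lemma norm_one_pm_half_if_Re_inverse_le:
  fixes \<alpha> :: complex
  assumes "Re (1 / \<alpha>) \<le> -1"
  shows "norm (1 - \<alpha> / 2) > 1 \<and> norm (1 + \<alpha> / 2) < 1"
proof -
  have "\<alpha> \<noteq> 0"
    using assms by auto
  define r where "r = (norm \<alpha>)\<^sup>2"
  have "r > 0"
    using \<open>\<alpha> \<noteq> 0\<close> by (simp add: r_def)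
  moreover have "Re \<alpha> / r \<le> -1"
    using assms by (simp add: r_def Re_divide')
  ultimately have "Re \<alpha> \<le> - r"
    by (simp add: divide_le_eq)
  moreover have "(norm (1 - \<alpha> / 2))\<^sup>2 = 1 - Re \<alpha> + r / 4"
    and "(norm (1 + \<alpha> / 2))\<^sup>2 = 1 + Re \<alpha> + r / 4"
    unfolding r_def cmod_power2 by (simp_all add: power2_eq_square field_simps)
  ultimately have "(norm (1 - \<alpha> / 2))\<^sup>2 > 1" and "(norm (1 + \<alpha> / 2))\<^sup>2 < 1"
    using \<open>r > 0\<close> by simp_all
  then show ?thesis
    using power_less_imp_less_base[of 1 2 "norm (1 - \<alpha> / 2)"] by (simp add: abs_square_less_1)
qed

theorem proposition2:
  fixes n :: nat and \<alpha> :: complex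
  assumes "n \<ge> 1" and "poly (bessel_poly n) \<alpha> = 0"
  shows "norm (1 - \<alpha> / 2) > 1 \<and> norm (1 + \<alpha> / 2) < 1"
  using norm_one_pm_half_if_Re_inverse_le Re_inverse_bessel_poly_root assms(2) by blast

end
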